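(* Let $K$ be a field, $R$ a connected $\mathbb N$-graded $K$-algebra, and let $A$ be a graded double Ore extension of $R$ with generators $x_1,x_2$, relation $x_2x_1=p_{12}x_1x_2+p_{11}x_1^2+\tau_1x_1+\tau_2x_2+\tau_0$, and maps $\sigma=(\sigma_{ij})$, $\delta$. Then $A$ is a graded skew PBW extension of $R$ (in $x_1,x_2$) if and only if $p_{12}\neq0$, $p_{11}=0$, $\sigma_{11}$ and $\sigma_{22}$ are automorphisms of $R$, and $\sigma_{12}(r)=\sigma_{21}(r)=0$ for all $r\in R$.
   Context: A graded algebra is connected if its degree-zero part is $K$. A $K$-algebra $B\supseteq R$ is a right double Ore extension of $R$ if it is generated by $R$ and $x_1,x_2$; $x_2x_1=p_{12}x_1x_2+p_{11}x_1^2+\tau_1x_1+\tau_2x_2+\tau_0$ with $p_{12},p_{11}\in K$, $\tau_i\in R$; $B$ is a free left $R$-module with basis $\{x_1^ax_2^b\}_{a,b\ge0}$; and $x_1R+x_2R\subseteq Rx_1+Rx_2+R$. The maps are defined by $x_ir=\sigma_{i1}(r)x_1+\sigma_{i2}(r)x_2+\delta_i(r)$. A left double Ore extension: generated by $R$ and $x_1,x_2$, $x_1x_2=p'_{12}x_2x_1+p'_{11}x_1^2+x_1\tau'_1+x_2\tau'_2+\tau'_0$ ($p'\in K$, $\tau'\in R$), free right $R$-module with basis $\{x_1^ax_2^b\}$, and $x_1R+x_2R\subseteq Rx_1+Rx_2+R$. A double Ore extension is both, with the same generators. Graded means all relations are homogeneous with $\deg x_1=\deg x_2=1$. A ring $A$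 is a skew PBW extension of $R$ in $x_1,\dots,x_n$ if $R\subseteq A$; $A$ is a free left $R$-module on the monomials $x_1^{\alpha_1}\cdots x_n^{\alpha_n}$; for each $i$ and $r\ne0$ there is $c_{i,r}\in R\setminus\{0\}$ with $x_ir-c_{i,r}x_i\in R$; for all $i,j$ there is $c_{i,j}\in R\setminus\{0\}$ with $x_jx_i-c_{i,j}x_ix_j\in R+Rx_1+\cdots+Rx_n$; then $x_ir=\sigma_i(r)x_i+\delta_i(r)$ with $\sigma_i$ injective endomorphism, $\delta_i$ a $\sigma_i$-derivation. Bijective: all $\sigma_i$ bijective and $c_{i,j}$ invertible. Graded skew PBW extension: bijective, $R$ $\mathbb N$-graded, $\sigma_i$ graded, $\delta_i(R_m)\subseteq R_{m+1}$, $x_jx_i-c_{i,j}x_ix_j\in R_2+R_1x_1+\cdots+R_1x_n$ with $c_{i,j}\in R_0$. *)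

theory Defs
  imports Main
begin

text \<open>Everything lives inside one ring A, modelled as the whole type 'a.
  R is a subring of A, K a central subfield contained in R (A is a K-algebra).\<close>

definition is_subring :: "'a::ring_1 set \<Rightarrow> bool" where
  "is_subring R \<longleftrightarrow> 0 \<in> R \<and> 1 \<in> R \<and>
     (\<forall>a\<in>R. \<forall>b\<in>R. a + b \<in> R \<and> a * b \<in> R \<and> - a \<in> R)"

definition central_subfield :: "'a::ring_1 set \<Rightarrow> bool" where
  "central_subfield K \<longleftrightarrow> (0::'a) \<noteq> 1 \<and> is_subring K \<and>
     (\<forall>a\<in>K. \<forall>b\<in>K. a * b = b * a) \<and>
     (\<forall>a\<in>K. a \<noteq> 0 \<longrightarrow> (\<exists>b\<in>K. a * b = 1)) \<and>
     (\<forall>k\<in>K. \<forall>a. k * a = a * k)"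

definition connected_graded_algebra :: "'a::ring_1 set \<Rightarrow> 'a set \<Rightarrow> (nat \<Rightarrow> 'a set) \<Rightarrow> bool" where
  "connected_graded_algebra K R Rg \<longleftrightarrow> is_subring R \<and> K \<subseteq> R \<and>
     (\<forall>n. Rg n \<subseteq> R \<and> 0 \<in> Rg n \<and>
        (\<forall>a\<in>Rg n. \<forall>b\<in>Rg n. a + b \<in> Rg n \<and> - a \<in> Rg n) \<and>
        (\<forall>k\<in>K. \<forall>a\<in>Rg n. k * a \<in> Rg n)) \<and>
     (\<forall>m n. \<forall>a\<in>Rg m. \<forall>b\<in>Rg n. a * b \<in> Rg (m + n)) \<and>
     (\<forall>r\<in>R. \<exists>!f::nat \<Rightarrow> 'a. (\<forall>n. f n \<in> Rg n) \<and> finite {n. f n \<noteq> 0} \<and>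
                          r = (\<Sum>n\<in>{n. f n \<noteq> 0}. f n)) \<and>
     Rg 0 = K"

definition free_left_basis :: "'a::ring_1 set \<Rightarrow> 'a \<Rightarrow> 'a \<Rightarrow> bool" where
  "free_left_basis R x1 x2 \<longleftrightarrow>
     (\<forall>a::'a. \<exists>!c::nat \<times> nat \<Rightarrow> 'a. (\<forall>ij. c ij \<in> R) \<and> finite {ij. c ij \<noteq> 0} \<and>
        a = (\<Sum>ij\<in>{ij. c ij \<noteq> 0}. c ij * x1 ^ fst ij * x2 ^ snd ij))"

definition free_right_basis :: "'a::ring_1 set \<Rightarrow> 'a \<Rightarrow> 'a \<Rightarrow> bool" where
  "free_right_basis R x1 x2 \<longleftrightarrow>
     (\<forall>a::'a. \<exists>!c::nat \<times> nat \<Rightarrow> 'a. (\<forall>ij. c ij \<in> R) \<and> finite {ij. c ij \<noteq> 0} \<and>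
        a = (\<Sum>ij\<in>{ij. c ij \<noteq> 0}. x1 ^ fst ij * x2 ^ snd ij * c ij))"

text \<open>Graded right double Ore extension with the given data (p12,p11,tau,sigma,delta).
  Graded: deg x1 = deg x2 = 1 and all relations homogeneous.\<close>
definition graded_right_double_Ore ::
  "'a::ring_1 set \<Rightarrow> 'a set \<Rightarrow> (nat \<Rightarrow> 'a set) \<Rightarrow> 'a \<Rightarrow> 'a \<Rightarrow> 'a \<Rightarrow> 'a \<Rightarrow> 'a \<Rightarrow> 'a \<Rightarrow> 'a \<Rightarrow>
   ('a \<Rightarrow> 'a) \<Rightarrow> ('a \<Rightarrow> 'a) \<Rightarrow> ('a \<Rightarrow> 'a) \<Rightarrow> ('a \<Rightarrow> 'a) \<Rightarrow> ('a \<Rightarrow> 'a) \<Rightarrow> ('a \<Rightarrow> 'a) \<Rightarrow> bool" where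
  "graded_right_double_Ore K R Rg x1 x2 p12 p11 \<tau>0 \<tau>1 \<tau>2 \<sigma>11 \<sigma>12 \<sigma>21 \<sigma>22 \<delta>1 \<delta>2 \<longleftrightarrow>
     p12 \<in> K \<and> p11 \<in> K \<and> \<tau>1 \<in> Rg 1 \<and> \<tau>2 \<in> Rg 1 \<and> \<tau>0 \<in> Rg 2 \<and>
     x2 * x1 = p12 * x1 * x2 + p11 * x1 ^ 2 + \<tau>1 * x1 + \<tau>2 * x2 + \<tau>0 \<and>
     free_left_basis R x1 x2 \<and>
     (\<forall>r\<in>R. \<sigma>11 r \<in> R \<and> \<sigma>12 r \<in> R \<and> \<sigma>21 r \<in> R \<and> \<sigma>22 r \<in> R \<and> \<delta>1 r \<in> R \<and> \<delta>2 r \<in> R \<and>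
        x1 * r = \<sigma>11 r * x1 + \<sigma>12 r * x2 + \<delta>1 r \<and>
        x2 * r = \<sigma>21 r * x1 + \<sigma>22 r * x2 + \<delta>2 r) \<and>
     (\<forall>m. \<sigma>11 ` Rg m \<subseteq> Rg m \<and> \<sigma>12 ` Rg m \<subseteq> Rg m \<and> \<sigma>21 ` Rg m \<subseteq> Rg m \<and>
          \<sigma>22 ` Rg m \<subseteq> Rg m \<and> \<delta>1 ` Rg m \<subseteq> Rg (m + 1) \<and> \<delta>2 ` Rg m \<subseteq> Rg (m + 1))"

definition graded_left_double_Ore ::
  "'a::ring_1 set \<Rightarrow> 'a set \<Rightarrow> (nat \<Rightarrow> 'a set) \<Rightarrow> 'a \<Rightarrow> 'a \<Rightarrow> bool" where
  "graded_left_double_Ore K R Rg x1 x2 \<longleftrightarrow>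
     (\<exists>q12\<in>K. \<exists>q11\<in>K. \<exists>t1\<in>Rg 1. \<exists>t2\<in>Rg 1. \<exists>t0\<in>Rg 2.
        x1 * x2 = q12 * x2 * x1 + q11 * x1 ^ 2 + x1 * t1 + x2 * t2 + t0) \<and>
     free_right_basis R x1 x2 \<and>
     (\<forall>r\<in>R. \<forall>x\<in>{x1, x2}. \<exists>a\<in>R. \<exists>b\<in>R. \<exists>c\<in>R. x * r = a * x1 + b * x2 + c)"

definition graded_double_Ore ::
  "'a::ring_1 set \<Rightarrow> 'a set \<Rightarrow> (nat \<Rightarrow> 'a set) \<Rightarrow> 'a \<Rightarrow> 'a \<Rightarrow> 'a \<Rightarrow> 'a \<Rightarrow> 'a \<Rightarrow> 'a \<Rightarrow> 'a \<Rightarrow>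
   ('a \<Rightarrow> 'a) \<Rightarrow> ('a \<Rightarrow> 'a) \<Rightarrow> ('a \<Rightarrow> 'a) \<Rightarrow> ('a \<Rightarrow> 'a) \<Rightarrow> ('a \<Rightarrow> 'a) \<Rightarrow> ('a \<Rightarrow> 'a) \<Rightarrow> bool" where
  "graded_double_Ore K R Rg x1 x2 p12 p11 \<tau>0 \<tau>1 \<tau>2 \<sigma>11 \<sigma>12 \<sigma>21 \<sigma>22 \<delta>1 \<delta>2 \<longleftrightarrow>
     graded_right_double_Ore K R Rg x1 x2 p12 p11 \<tau>0 \<tau>1 \<tau>2 \<sigma>11 \<sigma>12 \<sigma>21 \<sigma>22 \<delta>1 \<delta>2 \<and>
     graded_left_double_Ore K R Rg x1 x2"

definition gen2 :: "'a \<Rightarrow> 'a \<Rightarrow> nat \<Rightarrow> 'a" where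
  "gen2 x1 x2 i = (if i = 1 then x1 else x2)"

definition skew_PBW2 :: "'a::ring_1 set \<Rightarrow> 'a \<Rightarrow> 'a \<Rightarrow> bool" where
  "skew_PBW2 R x1 x2 \<longleftrightarrow> is_subring R \<and> free_left_basis R x1 x2 \<and>
     (\<forall>i\<in>{1::nat, 2}. \<forall>r\<in>R. r \<noteq> 0 \<longrightarrow>
        (\<exists>c\<in>R. c \<noteq> 0 \<and> gen2 x1 x2 i * r - c * gen2 x1 x2 i \<in> R)) \<and>
     (\<forall>i\<in>{1::nat, 2}. \<forall>j\<in>{1::nat, 2}. \<exists>c\<in>R. c \<noteq> 0 \<and>
        gen2 x1 x2 j * gen2 x1 x2 i - c * gen2 x1 x2 i * gen2 x1 x2 j
          \<in> {r + a * x1 + b * x2 | r a b. r \<in> R \<and> a \<in> R \<and> b \<in> R})"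

text \<open>Graded skew PBW extension: bijective (sigma_i bijective, c_ij invertible),
  sigma_i graded, delta_i raising degree by one, and the c_ij in R_0 with
  x_j x_i - c_ij x_i x_j in R_2 + R_1 x1 + R_1 x2.\<close>
definition graded_skew_PBW2 :: "'a::ring_1 set \<Rightarrow> (nat \<Rightarrow> 'a set) \<Rightarrow> 'a \<Rightarrow> 'a \<Rightarrow> bool" where
  "graded_skew_PBW2 R Rg x1 x2 \<longleftrightarrow> skew_PBW2 R x1 x2 \<and>
     (\<forall>i\<in>{1::nat, 2}. \<exists>\<sigma> \<delta>. (\<forall>r\<in>R. \<sigma> r \<in> R \<and> \<delta> r \<in> R \<and>
            gen2 x1 x2 i * r = \<sigma> r * gen2 x1 x2 i + \<delta> r) \<and>
        bij_betw \<sigma> R R \<and> (\<forall>m. \<sigma> ` Rg m \<subseteq> Rg m) \<and> (\<forall>m. \<delta> ` Rg m \<subseteq> Rg (m + 1))) \<and>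
     (\<forall>i\<in>{1::nat, 2}. \<forall>j\<in>{1::nat, 2}. \<exists>c\<in>Rg 0. c \<noteq> 0 \<and>
        (\<exists>d\<in>R. c * d = 1 \<and> d * c = 1) \<and>
        gen2 x1 x2 j * gen2 x1 x2 i - c * gen2 x1 x2 i * gen2 x1 x2 j
          \<in> {r + a * x1 + b * x2 | r a b. r \<in> Rg 2 \<and> a \<in> Rg 1 \<and> b \<in> Rg 1})"

definition ring_automorphism :: "'a::ring_1 set \<Rightarrow> ('a \<Rightarrow> 'a) \<Rightarrow> bool" where
  "ring_automorphism R f \<longleftrightarrow> bij_betw f R R \<and> f 1 = 1 \<and>
     (\<forall>a\<in>R. \<forall>b\<in>R. f (a + b) = f a + f b \<and> f (a * b) = f a * f b)"

end

theory Submission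
  imports Defs
begin

text \<open>Everything is read off by comparing coefficients in the left R-basis of monomials
  x1^a x2^b. A skew PBW rule x_i r = s(r) x_i + d(r) and the double Ore rule
  x_i r = sigma_i1(r) x1 + sigma_i2(r) x2 + delta_i(r) expand the same element, so they agree
  exactly when the cross coefficient (sigma_12 resp. sigma_21) vanishes, and then s = sigma_ii;
  expanding x_i (a b) = (x_i a) b and comparing coefficients shows that such an s is a ring
  endomorphism, hence an automorphism as soon as it is bijective. In the same way, a PBW
  relation x2 x1 - c x1 x2 in R_2 + R_1 x1 + R_1 x2 compared with the Ore relation forces
  p11 = 0 and p12 = c, a nonzero scalar. Conversely, under these conditions the Ore data are
  themselves graded skew PBW data, with c_12 = p12 and c_21 the inverse of p12 in K.\<close>

lemma is_subringD:
  assumes "is_subring R"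
  shows subring_0: "0 \<in> R" and subring_1: "1 \<in> R"
    and subring_add: "a \<in> R \<Longrightarrow> b \<in> R \<Longrightarrow> a + b \<in> R"
    and subring_mult: "a \<in> R \<Longrightarrow> b \<in> R \<Longrightarrow> a * b \<in> R"
    and subring_diff: "a \<in> R \<Longrightarrow> b \<in> R \<Longrightarrow> a - b \<in> R"
  using assms unfolding is_subring_def diff_conv_add_uminus by blast+

lemma free_left_basis_coeffs_eq_0:
  fixes R :: "'a::ring_1 set"
  assumes basis: "free_left_basis R x1 x2" and "0 \<in> R"
    and "finite S" and "\<forall>ij\<in>S. c ij \<in> R"
    and sum_0: "(\<Sum>ij\<in>S. c ij * x1 ^ fst ij * x2 ^ snd ij) = 0"
  shows "\<forall>ij\<in>S. c ij = 0"
proof -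
  define P where "P f \<longleftrightarrow> (\<forall>ij. f ij \<in> R) \<and> finite {ij. f ij \<noteq> 0} \<and>
      (0::'a) = (\<Sum>ij\<in>{ij. f ij \<noteq> 0}. f ij * x1 ^ fst ij * x2 ^ snd ij)" for f
  define c' where "c' ij = (if ij \<in> S then c ij else 0)" for ij
  have supp: "{ij. c' ij \<noteq> 0} \<subseteq> S"
    by (auto simp: c'_def split: if_splits)
  have "(\<Sum>ij\<in>{ij. c' ij \<noteq> 0}. c' ij * x1 ^ fst ij * x2 ^ snd ij)
      = (\<Sum>ij\<in>S. c' ij * x1 ^ fst ij * x2 ^ snd ij)"
    by (rule sum.mono_neutral_left[OF \<open>finite S\<close> supp]) auto
  also have "\<dots> = 0"
    using sum_0 by (simp add: c'_def)
  finally have "P c'"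
    using assms(2-4) supp finite_subset unfolding P_def c'_def by auto
  moreover have "P (\<lambda>_. 0)"
    using \<open>0 \<in> R\<close> unfolding P_def by simp
  moreover have "\<exists>!f. P f"
    using basis unfolding free_left_basis_def P_def by blast
  ultimately have "c' = (\<lambda>_. 0)"
    by blast
  then show ?thesis
    by (metis c'_def)
qed

lemma free_left_basis_quadratic_coeffs_eq:
  fixes R :: "'a::ring_1 set"
  assumes "free_left_basis R x1 x2" and "is_subring R"
    and "a \<in> R" "b \<in> R" "c \<in> R" "d \<in> R" "e \<in> R"
    and "a' \<in> R" "b' \<in> R" "c' \<in> R" "d' \<in> R" "e' \<in> R"
    and "a + b * x1 + c * x2 + d * x1 * x2 + e * x1 ^ 2 =
         a' + b' * x1 + c' * x2 + d' * x1 * x2 + e' * x1 ^ 2"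
  shows "a = a' \<and> b = b' \<and> c = c' \<and> d = d' \<and> e = e'"
proof -
  let ?S = "{(0, 0), (1, 0), (0, 1), (1, 1), (2, 0)} :: (nat \<times> nat) set"
  define f where "f ij =
      (if ij = (0, 0) then a - a' else if ij = (1, 0) then b - b' else if ij = (0, 1) then c - c'
       else if ij = (1, 1) then d - d' else e - e')" for ij :: "nat \<times> nat"
  have "(\<Sum>ij\<in>?S. f ij * x1 ^ fst ij * x2 ^ snd ij) = 0"
    using assms(13) by (simp add: f_def algebra_simps)
  then have "\<forall>ij\<in>?S. f ij = 0"
    using free_left_basis_coeffs_eq_0[OF assms(1) subring_0[OF assms(2)], of ?S f] assms(3-12)
      subring_diff[OF assms(2)] by (simp add: f_def)
  then show ?thesis
    by (simp add: f_def)
qed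

lemma free_left_basis_linear_coeffs_eq:
  fixes R :: "'a::ring_1 set"
  assumes "free_left_basis R x1 x2" and "is_subring R" and "(x, y) \<in> {(x1, x2), (x2, x1)}"
    and "a \<in> R" "b \<in> R" "c \<in> R" "a' \<in> R" "b' \<in> R" "c' \<in> R"
    and eq: "a + b * x + c * y = a' + b' * x + c' * y"
  shows "a = a' \<and> b = b' \<and> c = c'"
proof -
  note zero = subring_0[OF \<open>is_subring R\<close>]
  note quadratic = free_left_basis_quadratic_coeffs_eq[OF assms(1,2) _ _ _ zero zero _ _ _ zero zero]
  consider "x = x1" "y = x2" | "x = x2" "y = x1"
    using \<open>(x, y) \<in> {(x1, x2), (x2, x1)}\<close> by blast
  then show ?thesis
  proof cases
    case 1
    then show ?thesis
      using quadratic[of a b c a' b' c'] assms(4-9) eq by simp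
  next
    case 2
    then have "a + c * x1 + b * x2 = a' + c' * x1 + b' * x2"
      using eq by (simp add: add.commute add.left_commute)
    then show ?thesis
      using quadratic[of a c b a' c' b'] assms(4-9) by simp
  qed
qed

lemma free_left_basis_generator_coeffs_eq:
  fixes R :: "'a::ring_1 set"
  assumes "free_left_basis R x1 x2" and "is_subring R" and "x \<in> {x1, x2}"
    and "a \<in> R" "b \<in> R" "a' \<in> R" "b' \<in> R"
    and "a + b * x = a' + b' * x"
  shows "a = a' \<and> b = b'"
proof -
  note zero = subring_0[OF \<open>is_subring R\<close>]
  obtain y where "(x, y) \<in> {(x1, x2), (x2, x1)}"
    using \<open>x \<in> {x1, x2}\<close> by blast
  from free_left_basis_linear_coeffs_eq[OF assms(1,2) this assms(4,5) zero assms(6,7) zero]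
  show ?thesis
    using assms(8) by simp
qed

lemma ring_automorphism_if_commutation_rule:
  fixes R :: "'a::ring_1 set"
  assumes "is_subring R"
    and coeffs_eq: "\<And>a b a' b'. a \<in> R \<Longrightarrow> b \<in> R \<Longrightarrow> a' \<in> R \<Longrightarrow> b' \<in> R \<Longrightarrow>
        a + b * x = a' + b' * x \<Longrightarrow> a = a' \<and> b = b'"
    and in_R: "\<And>r. r \<in> R \<Longrightarrow> s r \<in> R \<and> d r \<in> R"
    and rule: "\<And>r. r \<in> R \<Longrightarrow> x * r = s r * x + d r"
    and "bij_betw s R R"
  shows "ring_automorphism R s"
proof -
  have closed: "a + b \<in> R" "a * b \<in> R" if "a \<in> R" "b \<in> R" for a b
    using subring_add subring_mult \<open>is_subring R\<close> that by blast+
  have "0 \<in> R" "1 \<in> R"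
    using subring_0 subring_1 \<open>is_subring R\<close> by blast+
  have "d 1 + s 1 * x = 0 + 1 * x"
    using rule[OF \<open>1 \<in> R\<close>] by (simp add: add.commute)
  then have "s 1 = 1"
    using coeffs_eq in_R[OF \<open>1 \<in> R\<close>] \<open>0 \<in> R\<close> \<open>1 \<in> R\<close> by blast
  moreover have "s (a + b) = s a + s b" if a: "a \<in> R" and b: "b \<in> R" for a b
  proof -
    have "d (a + b) + s (a + b) * x = x * (a + b)"
      by (simp add: rule closed a b add.commute)
    also have "\<dots> = (d a + d b) + (s a + s b) * x"
      by (simp add: rule a b algebra_simps)
    finally have "d (a + b) + s (a + b) * x = (d a + d b) + (s a + s b) * x" .
    moreover have "d a + d b \<in> R" "s a + s b \<in> R"
      using in_R a b closed by auto
    ultimately show ?thesis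
      using coeffs_eq in_R[OF closed(1)[OF a b]] by blast
  qed
  moreover have "s (a * b) = s a * s b" if a: "a \<in> R" and b: "b \<in> R" for a b
  proof -
    have "d (a * b) + s (a * b) * x = x * (a * b)"
      by (simp add: rule closed a b add.commute)
    also have "\<dots> = (s a * x + d a) * b"
      by (simp add: rule a flip: mult.assoc)
    also have "\<dots> = s a * (x * b) + d a * b"
      by (simp add: algebra_simps)
    also have "\<dots> = (s a * d b + d a * b) + (s a * s b) * x"
      by (simp add: rule b algebra_simps)
    finally have "d (a * b) + s (a * b) * x = (s a * d b + d a * b) + (s a * s b) * x" .
    moreover have "s a * d b + d a * b \<in> R" "s a * s b \<in> R"
      using in_R a b closed by auto
    ultimately show ?thesis
      using coeffs_eq in_R[OF closed(2)[OF a b]] by blast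
  qed
  ultimately show ?thesis
    using \<open>bij_betw s R R\<close> unfolding ring_automorphism_def by blast
qed

definition graded_skew_rule :: "'a::ring_1 set \<Rightarrow> (nat \<Rightarrow> 'a set) \<Rightarrow> 'a \<Rightarrow> bool" where
  "graded_skew_rule R Rg x \<longleftrightarrow> (\<exists>\<sigma> \<delta>. (\<forall>r\<in>R. \<sigma> r \<in> R \<and> \<delta> r \<in> R \<and> x * r = \<sigma> r * x + \<delta> r) \<and>
     bij_betw \<sigma> R R \<and> (\<forall>m. \<sigma> ` Rg m \<subseteq> Rg m) \<and> (\<forall>m. \<delta> ` Rg m \<subseteq> Rg (m + 1)))"

definition graded_quasi_commute ::
  "'a::ring_1 set \<Rightarrow> (nat \<Rightarrow> 'a set) \<Rightarrow> 'a \<Rightarrow> 'a \<Rightarrow> 'a \<Rightarrow> 'a \<Rightarrow> bool" where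
  "graded_quasi_commute R Rg x1 x2 x y \<longleftrightarrow> (\<exists>c\<in>Rg 0. c \<noteq> 0 \<and> (\<exists>d\<in>R. c * d = 1 \<and> d * c = 1) \<and>
     y * x - c * x * y \<in> {r + a * x1 + b * x2 | r a b. r \<in> Rg 2 \<and> a \<in> Rg 1 \<and> b \<in> Rg 1})"

lemma graded_skew_rule_nonzero_coeff:
  fixes R :: "'a::ring_1 set"
  assumes "free_left_basis R x1 x2" and "is_subring R" and "x \<in> {x1, x2}"
    and "graded_skew_rule R Rg x" and "r \<in> R" and "r \<noteq> 0"
  shows "\<exists>c\<in>R. c \<noteq> 0 \<and> x * r - c * x \<in> R"
proof -
  obtain \<sigma> \<delta> where rule: "\<forall>r\<in>R. \<sigma> r \<in> R \<and> \<delta> r \<in> R \<and> x * r = \<sigma> r * x + \<delta> r"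
    and "bij_betw \<sigma> R R"
    using \<open>graded_skew_rule R Rg x\<close> unfolding graded_skew_rule_def by (elim exE conjE) (rule that)
  have "0 \<in> R"
    using subring_0[OF \<open>is_subring R\<close>] .
  then have "\<sigma> 0 \<in> R" "\<delta> 0 \<in> R" "\<delta> 0 + \<sigma> 0 * x = 0 + 0 * x"
    using rule by (auto simp: add.commute)
  then have "\<sigma> 0 = 0"
    \<comment> \<open>not a consequence of bijectivity: it is read off from x * 0 = 0\<close>
    using free_left_basis_generator_coeffs_eq[OF assms(1-3)] \<open>0 \<in> R\<close> by blast
  then have "\<sigma> r \<noteq> 0"
    using bij_betw_imp_inj_on[OF \<open>bij_betw \<sigma> R R\<close>] \<open>0 \<in> R\<close> assms(5,6)
    by (metis inj_on_eq_iff)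
  moreover have "\<sigma> r \<in> R" "x * r - \<sigma> r * x \<in> R"
    using rule assms(5) by auto
  ultimately show ?thesis
    by blast
qed

lemma graded_quasi_commute_ungraded:
  assumes "graded_quasi_commute R Rg x1 x2 x y" and "\<And>n. Rg n \<subseteq> R"
  shows "\<exists>c\<in>R. c \<noteq> 0 \<and>
    y * x - c * x * y \<in> {r + a * x1 + b * x2 | r a b. r \<in> R \<and> a \<in> R \<and> b \<in> R}"
  using assms unfolding graded_quasi_commute_def by blast

lemma graded_skew_PBW2_iff:
  fixes R :: "'a::ring_1 set"
  assumes "is_subring R" and "free_left_basis R x1 x2" and "\<And>n. Rg n \<subseteq> R"
  shows "graded_skew_PBW2 R Rg x1 x2 \<longleftrightarrow>
     graded_skew_rule R Rg x1 \<and> graded_skew_rule R Rg x2 \<and>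
     graded_quasi_commute R Rg x1 x2 x1 x1 \<and> graded_quasi_commute R Rg x1 x2 x1 x2 \<and>
     graded_quasi_commute R Rg x1 x2 x2 x1 \<and> graded_quasi_commute R Rg x1 x2 x2 x2"
    (is "_ \<longleftrightarrow> ?graded")
proof -
  have gen2: "gen2 x1 x2 1 = x1" "gen2 x1 x2 2 = x2"
    by (simp_all add: gen2_def)
  have ball12: "(\<forall>i\<in>{1::nat, 2}. P i) \<longleftrightarrow> P 1 \<and> P 2" for P
    by simp
  have "skew_PBW2 R x1 x2" if ?graded
    unfolding skew_PBW2_def ball12 gen2
    using that graded_quasi_commute_ungraded[where Rg = Rg, OF _ assms(3)]
      graded_skew_rule_nonzero_coeff[OF assms(2,1), of x1 Rg]
      graded_skew_rule_nonzero_coeff[OF assms(2,1), of x2 Rg]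
    by (simp add: assms(1,2))
  then show ?thesis
    unfolding graded_skew_PBW2_def ball12 gen2 graded_skew_rule_def graded_quasi_commute_def
    by blast
qed

lemma graded_skew_rule_iff:
  fixes R :: "'a::ring_1 set"
  assumes "free_left_basis R x1 x2" and "is_subring R" and xy: "(x, y) \<in> {(x1, x2), (x2, x1)}"
    and in_R: "\<And>r. r \<in> R \<Longrightarrow> s r \<in> R \<and> t r \<in> R \<and> d r \<in> R"
    and rule: "\<And>r. r \<in> R \<Longrightarrow> x * r = s r * x + t r * y + d r"
    and graded: "\<And>m. s ` Rg m \<subseteq> Rg m" "\<And>m. d ` Rg m \<subseteq> Rg (m + 1)"
  shows "graded_skew_rule R Rg x \<longleftrightarrow> ring_automorphism R s \<and> (\<forall>r\<in>R. t r = 0)"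
proof
  assume "graded_skew_rule R Rg x"
  then obtain \<sigma> \<delta> where skew_rule: "\<forall>r\<in>R. \<sigma> r \<in> R \<and> \<delta> r \<in> R \<and> x * r = \<sigma> r * x + \<delta> r"
    and "bij_betw \<sigma> R R"
    unfolding graded_skew_rule_def by (elim exE conjE) (rule that)
  have "0 \<in> R"
    using subring_0[OF \<open>is_subring R\<close>] .
  have agree: "s r = \<sigma> r \<and> t r = 0" if "r \<in> R" for r
  proof -
    have "\<sigma> r \<in> R" "\<delta> r \<in> R" "x * r = \<sigma> r * x + \<delta> r"
      using skew_rule that by auto
    then have "d r + s r * x + t r * y = \<delta> r + \<sigma> r * x + 0 * y"
      using rule[OF that] by (simp add: add.commute add.left_commute)
    with \<open>\<sigma> r \<in> R\<close> \<open>\<delta> r \<in> R\<close> show ?thesis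
      using free_left_basis_linear_coeffs_eq[OF assms(1,2) xy] in_R[OF that] \<open>0 \<in> R\<close> by blast
  qed
  have "x \<in> {x1, x2}"
    using xy by blast
  have "ring_automorphism R s"
  proof (rule ring_automorphism_if_commutation_rule[OF \<open>is_subring R\<close>])
    show "a = a' \<and> b = b'"
      if "a \<in> R" "b \<in> R" "a' \<in> R" "b' \<in> R" "a + b * x = a' + b' * x" for a b a' b'
      using free_left_basis_generator_coeffs_eq[OF assms(1,2) \<open>x \<in> {x1, x2}\<close>] that by blast
    show "s r \<in> R \<and> d r \<in> R" if "r \<in> R" for r
      using in_R[OF that] by blast
    show "x * r = s r * x + d r" if "r \<in> R" for r
      using rule[OF that] agree[OF that] by simp
    show "bij_betw s R R"
      using \<open>bij_betw \<sigma> R R\<close> agree by (simp cong: bij_betw_cong)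
  qed
  then show "ring_automorphism R s \<and> (\<forall>r\<in>R. t r = 0)"
    using agree by blast
next
  assume "ring_automorphism R s \<and> (\<forall>r\<in>R. t r = 0)"
  then have "bij_betw s R R" and "\<forall>r\<in>R. x * r = s r * x + d r"
    using rule unfolding ring_automorphism_def by simp_all
  then show "graded_skew_rule R Rg x"
    unfolding graded_skew_rule_def using in_R graded by blast
qed

locale graded_right_double_Ore_extension =
  fixes K R :: "'a::ring_1 set" and Rg :: "nat \<Rightarrow> 'a set"
    and x1 x2 p12 p11 \<tau>0 \<tau>1 \<tau>2 :: 'a
    and \<sigma>11 \<sigma>12 \<sigma>21 \<sigma>22 \<delta>1 \<delta>2 :: "'a \<Rightarrow> 'a"
  assumes central_subfield: "central_subfield K"
    and connected_graded: "connected_graded_algebra K R Rg"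
    and right_double_Ore:
      "graded_right_double_Ore K R Rg x1 x2 p12 p11 \<tau>0 \<tau>1 \<tau>2 \<sigma>11 \<sigma>12 \<sigma>21 \<sigma>22 \<delta>1 \<delta>2"
begin

lemma ring_nontrivial: "(0::'a) \<noteq> 1"
  and one_in_K: "1 \<in> K"
  and K_inverse: "a \<in> K \<Longrightarrow> a \<noteq> 0 \<Longrightarrow> \<exists>b\<in>K. a * b = 1 \<and> b * a = 1"
  using central_subfield unfolding central_subfield_def is_subring_def by metis+

lemma R_subring: "is_subring R"
  and K_subset: "K \<subseteq> R"
  and Rg_subset: "Rg n \<subseteq> R"
  and Rg_0: "Rg 0 = K"
  and zero_in_Rg: "0 \<in> Rg n"
  and uminus_in_Rg: "a \<in> Rg n \<Longrightarrow> - a \<in> Rg n"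
  and scale_in_Rg: "k \<in> K \<Longrightarrow> a \<in> Rg n \<Longrightarrow> k * a \<in> Rg n"
  using connected_graded unfolding connected_graded_algebra_def by auto

lemma p12_in_K: "p12 \<in> K"
  and p11_in_K: "p11 \<in> K"
  and \<tau>_in_Rg: "\<tau>0 \<in> Rg 2" "\<tau>1 \<in> Rg 1" "\<tau>2 \<in> Rg 1"
  and relation: "x2 * x1 = p12 * x1 * x2 + p11 * x1 ^ 2 + \<tau>1 * x1 + \<tau>2 * x2 + \<tau>0"
  and free_basis: "free_left_basis R x1 x2"
  using right_double_Ore unfolding graded_right_double_Ore_def by auto

lemma x1_rule: "r \<in> R \<Longrightarrow> x1 * r = \<sigma>11 r * x1 + \<sigma>12 r * x2 + \<delta>1 r"
  and x2_rule: "r \<in> R \<Longrightarrow> x2 * r = \<sigma>22 r * x2 + \<sigma>21 r * x1 + \<delta>2 r"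
  and rule_coeffs_in_R: "r \<in> R \<Longrightarrow> \<sigma>11 r \<in> R \<and> \<sigma>12 r \<in> R \<and> \<delta>1 r \<in> R"
    "r \<in> R \<Longrightarrow> \<sigma>22 r \<in> R \<and> \<sigma>21 r \<in> R \<and> \<delta>2 r \<in> R"
  and rule_coeffs_graded: "\<sigma>11 ` Rg m \<subseteq> Rg m" "\<delta>1 ` Rg m \<subseteq> Rg (m + 1)"
    "\<sigma>22 ` Rg m \<subseteq> Rg m" "\<delta>2 ` Rg m \<subseteq> Rg (m + 1)"
  using right_double_Ore unfolding graded_right_double_Ore_def by (auto simp: add.commute)

lemma x1_skew_rule_iff: "graded_skew_rule R Rg x1 \<longleftrightarrow> ring_automorphism R \<sigma>11 \<and> (\<forall>r\<in>R. \<sigma>12 r = 0)"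
  using graded_skew_rule_iff[where x = x1 and y = x2 and s = \<sigma>11 and t = \<sigma>12 and d = \<delta>1 and Rg = Rg,
      OF free_basis R_subring _ rule_coeffs_in_R(1) x1_rule rule_coeffs_graded(1,2)]
  by simp

lemma x2_skew_rule_iff: "graded_skew_rule R Rg x2 \<longleftrightarrow> ring_automorphism R \<sigma>22 \<and> (\<forall>r\<in>R. \<sigma>21 r = 0)"
  using graded_skew_rule_iff[where x = x2 and y = x1 and s = \<sigma>22 and t = \<sigma>21 and d = \<delta>2 and Rg = Rg,
      OF free_basis R_subring _ rule_coeffs_in_R(2) x2_rule rule_coeffs_graded(3,4)]
  by simp

lemma quasi_commute_refl: "graded_quasi_commute R Rg x1 x2 x x"
proof -
  have "x * x - 1 * x * x = 0 + 0 * x1 + 0 * x2"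
    by simp
  then have "x * x - 1 * x * x \<in> {r + a * x1 + b * x2 | r a b. r \<in> Rg 2 \<and> a \<in> Rg 1 \<and> b \<in> Rg 1}"
    using zero_in_Rg by blast
  moreover have "(1::'a) \<in> Rg 0" "(1::'a) \<in> R"
    using one_in_K K_subset Rg_0 by auto
  ultimately show ?thesis
    unfolding graded_quasi_commute_def using ring_nontrivial by force
qed

lemma x1_x2_quasi_commute_iff: "graded_quasi_commute R Rg x1 x2 x1 x2 \<longleftrightarrow> p12 \<noteq> 0 \<and> p11 = 0"
proof
  assume "graded_quasi_commute R Rg x1 x2 x1 x2"
  then obtain c r a b where "c \<in> Rg 0" "c \<noteq> 0" "r \<in> Rg 2" "a \<in> Rg 1" "b \<in> Rg 1"
    and eq: "x2 * x1 - c * x1 * x2 = r + a * x1 + b * x2"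
    unfolding graded_quasi_commute_def by blast
  have "\<tau>0 + \<tau>1 * x1 + \<tau>2 * x2 + p12 * x1 * x2 + p11 * x1 ^ 2 =
      r + a * x1 + b * x2 + c * x1 * x2 + 0 * x1 ^ 2"
    using eq unfolding relation by (simp add: algebra_simps)
  moreover have "\<tau>0 \<in> R" "\<tau>1 \<in> R" "\<tau>2 \<in> R" "r \<in> R" "a \<in> R" "b \<in> R" "c \<in> R"
    using \<tau>_in_Rg \<open>r \<in> Rg 2\<close> \<open>a \<in> Rg 1\<close> \<open>b \<in> Rg 1\<close> \<open>c \<in> Rg 0\<close> Rg_subset by blast+
  moreover have "p12 \<in> R" "p11 \<in> R" "0 \<in> R"
    using p12_in_K p11_in_K K_subset zero_in_Rg Rg_subset by blast+
  ultimately have "p12 = c \<and> p11 = 0"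
    using free_left_basis_quadratic_coeffs_eq[OF free_basis R_subring, of \<tau>0 \<tau>1 \<tau>2 p12 p11 r a b c 0]
    by blast
  with \<open>c \<noteq> 0\<close> show "p12 \<noteq> 0 \<and> p11 = 0"
    by blast
next
  assume "p12 \<noteq> 0 \<and> p11 = 0"
  then obtain q where "q \<in> K" "p12 * q = 1" "q * p12 = 1"
    using K_inverse p12_in_K by blast
  have "x2 * x1 - p12 * x1 * x2 = \<tau>0 + \<tau>1 * x1 + \<tau>2 * x2"
    using \<open>p12 \<noteq> 0 \<and> p11 = 0\<close> unfolding relation by (simp add: algebra_simps)
  then have "x2 * x1 - p12 * x1 * x2 \<in>
      {r + a * x1 + b * x2 | r a b. r \<in> Rg 2 \<and> a \<in> Rg 1 \<and> b \<in> Rg 1}"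
    using \<tau>_in_Rg by blast
  moreover have "p12 \<in> Rg 0" "q \<in> R"
    using p12_in_K \<open>q \<in> K\<close> K_subset Rg_0 by auto
  ultimately show "graded_quasi_commute R Rg x1 x2 x1 x2"
    unfolding graded_quasi_commute_def
    using \<open>p12 \<noteq> 0 \<and> p11 = 0\<close> \<open>p12 * q = 1\<close> \<open>q * p12 = 1\<close> by blast
qed

lemma x2_x1_quasi_commute:
  assumes "p12 \<noteq> 0" and "p11 = 0"
  shows "graded_quasi_commute R Rg x1 x2 x2 x1"
proof -
  obtain q where "q \<in> K" "p12 * q = 1" "q * p12 = 1"
    using K_inverse p12_in_K \<open>p12 \<noteq> 0\<close> by blast
  have "q * x2 * x1 = (q * p12) * x1 * x2 + (q * \<tau>1) * x1 + (q * \<tau>2) * x2 + q * \<tau>0"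
    using \<open>p11 = 0\<close> by (simp add: relation algebra_simps)
  then have "x1 * x2 - q * x2 * x1 = - (q * \<tau>0) + - (q * \<tau>1) * x1 + - (q * \<tau>2) * x2"
    using \<open>q * p12 = 1\<close> by (simp add: algebra_simps)
  moreover have "- (q * \<tau>0) \<in> Rg 2" "- (q * \<tau>1) \<in> Rg 1" "- (q * \<tau>2) \<in> Rg 1"
    using \<tau>_in_Rg \<open>q \<in> K\<close> by (simp_all add: uminus_in_Rg scale_in_Rg)
  ultimately have "x1 * x2 - q * x2 * x1 \<in>
      {r + a * x1 + b * x2 | r a b. r \<in> Rg 2 \<and> a \<in> Rg 1 \<and> b \<in> Rg 1}"
    by blast
  moreover have "q \<in> Rg 0" "p12 \<in> R" "q \<noteq> 0"
    using \<open>q \<in> K\<close> p12_in_K K_subset Rg_0 \<open>p12 * q = 1\<close> ring_nontrivial by auto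
  ultimately show ?thesis
    unfolding graded_quasi_commute_def using \<open>p12 * q = 1\<close> \<open>q * p12 = 1\<close> by blast
qed

end

theorem theorem3p8:
  fixes K R :: "'a::ring_1 set" and Rg :: "nat \<Rightarrow> 'a set"
    and x1 x2 p12 p11 \<tau>0 \<tau>1 \<tau>2 :: 'a
    and \<sigma>11 \<sigma>12 \<sigma>21 \<sigma>22 \<delta>1 \<delta>2 :: "'a \<Rightarrow> 'a"
  assumes "central_subfield K"
    and "connected_graded_algebra K R Rg"
    and "graded_double_Ore K R Rg x1 x2 p12 p11 \<tau>0 \<tau>1 \<tau>2 \<sigma>11 \<sigma>12 \<sigma>21 \<sigma>22 \<delta>1 \<delta>2"
  shows "graded_skew_PBW2 R Rg x1 x2 \<longleftrightarrow>
           p12 \<noteq> 0 \<and> p11 = 0 \<and> ring_automorphism R \<sigma>11 \<and> ring_automorphism R \<sigma>22 \<and>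
           (\<forall>r\<in>R. \<sigma>12 r = 0 \<and> \<sigma>21 r = 0)"
proof -
  interpret graded_right_double_Ore_extension K R Rg x1 x2 p12 p11 \<tau>0 \<tau>1 \<tau>2
      \<sigma>11 \<sigma>12 \<sigma>21 \<sigma>22 \<delta>1 \<delta>2
    \<comment> \<open>only the right double Ore half of the hypothesis is needed\<close>
    using assms unfolding graded_double_Ore_def by unfold_locales blast+
  have "graded_skew_PBW2 R Rg x1 x2 \<longleftrightarrow>
      graded_skew_rule R Rg x1 \<and> graded_skew_rule R Rg x2 \<and>
      graded_quasi_commute R Rg x1 x2 x1 x2 \<and> graded_quasi_commute R Rg x1 x2 x2 x1"
    using graded_skew_PBW2_iff[where Rg = Rg, OF R_subring free_basis Rg_subset] quasi_commute_refl
    by blast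
  also have "\<dots> \<longleftrightarrow> p12 \<noteq> 0 \<and> p11 = 0 \<and> ring_automorphism R \<sigma>11 \<and> ring_automorphism R \<sigma>22 \<and>
      (\<forall>r\<in>R. \<sigma>12 r = 0 \<and> \<sigma>21 r = 0)"
    using x1_skew_rule_iff x2_skew_rule_iff x1_x2_quasi_commute_iff x2_x1_quasi_commute by blast
  finally show ?thesis .
qed

end
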